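(* $NQC(HAM_n^{n/2})=O(\log n)$.
   Context: For even $n$ and $x,y\in\{0,1\}^n$, $HAM^t_n(x,y)=1$ iff $\sum_{i=1}^n(x_i\oplus y_i)\neq t$. Quantum communication model (Yao, no prior entanglement): Alice receives $x$, Bob $y$; each holds private qubits initialized to the input and $|0\rangle$; in each round one player applies a unitary to his qubits and sends one qubit; at the end a qubit is measured giving the output; the cost is the number of qubits exchanged. A nondeterministic quantum protocol for a Boolean $f$ rejects every input in $f^{-1}(0)$ with certainty and accepts every other input with positive probability; $NQC(f)$ is the minimum cost of such a protocol. *)

theory Defs
  imports Complex_Main
begin

text \<open>Qubit labels: Alice's private qubits, Bob's private qubits, and one
  message qubit per round (the qubit sent in round s is CQ s).\<close>
datatype qlab = AQ nat | BQ nat | CQ nat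

type_synonym basis = "qlab \<Rightarrow> bool"
type_synonym qop = "basis \<Rightarrow> basis \<Rightarrow> complex"
type_synonym qstate = "basis \<Rightarrow> complex"

definition basis_on :: "qlab set \<Rightarrow> basis set" where
  "basis_on S = {f. \<forall>q. q \<notin> S \<longrightarrow> \<not> f q}"

definition restr :: "basis \<Rightarrow> qlab set \<Rightarrow> basis" where
  "restr f S = (\<lambda>q. q \<in> S \<and> f q)"

definition unitary_on :: "qlab set \<Rightarrow> qop \<Rightarrow> bool" where
  "unitary_on S U \<longleftrightarrow>
     (\<forall>f\<in>basis_on S. \<forall>g\<in>basis_on S.
        (\<Sum>h\<in>basis_on S. cnj (U h f) * U h g) = (if f = g then 1 else 0))"

text \<open>Apply U (acting on register S) tensored with the identity on the rest.\<close>
definition apply_op :: "qlab set \<Rightarrow> qop \<Rightarrow> qstate \<Rightarrow> qstate" where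
  "apply_op S U \<psi> =
     (\<lambda>f. \<Sum>g\<in>basis_on S. U (restr f S) g * \<psi> (\<lambda>q. g q \<or> (q \<notin> S \<and> f q)))"

text \<open>turn s = True means Alice sends in round s. The unitaries may depend on
  the player's own input (equivalent to unitaries acting on an input register).
  Round index rounds is used for the final local unitary of the player who
  measures; that player measures qubit 0 of his private register.\<close>
record qproto =
  qa :: nat
  qb :: nat
  rounds :: nat
  turn :: "nat \<Rightarrow> bool"
  ua :: "bool list \<Rightarrow> nat \<Rightarrow> qop"
  ub :: "bool list \<Rightarrow> nat \<Rightarrow> qop"
  fin_alice :: bool

definition all_qubits :: "qproto \<Rightarrow> qlab set" where
  "all_qubits P = {AQ i |i. i < qa P} \<union> {BQ j |j. j < qb P} \<union> {CQ s |s. s < rounds P}"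

text \<open>Qubits held by Alice / Bob before round t is executed.\<close>
definition alice_holds :: "qproto \<Rightarrow> nat \<Rightarrow> qlab set" where
  "alice_holds P t = {AQ i |i. i < qa P} \<union>
     {CQ s |s. s < rounds P \<and> ((s < t \<and> \<not> turn P s) \<or> (t \<le> s \<and> turn P s))}"

definition bob_holds :: "qproto \<Rightarrow> nat \<Rightarrow> qlab set" where
  "bob_holds P t = {BQ j |j. j < qb P} \<union>
     {CQ s |s. s < rounds P \<and> ((s < t \<and> turn P s) \<or> (t \<le> s \<and> \<not> turn P s))}"

definition init_state :: qstate where
  "init_state = (\<lambda>f. if (\<forall>q. \<not> f q) then 1 else 0)"

definition step :: "qproto \<Rightarrow> bool list \<Rightarrow> bool list \<Rightarrow> nat \<Rightarrow> qstate \<Rightarrow> qstate" where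
  "step P x y t \<psi> =
     (if turn P t then apply_op (alice_holds P t) (ua P x t) \<psi>
      else apply_op (bob_holds P t) (ub P y t) \<psi>)"

fun run_upto :: "qproto \<Rightarrow> bool list \<Rightarrow> bool list \<Rightarrow> nat \<Rightarrow> qstate" where
  "run_upto P x y 0 = init_state"
| "run_upto P x y (Suc t) = step P x y t (run_upto P x y t)"

definition final_state :: "qproto \<Rightarrow> bool list \<Rightarrow> bool list \<Rightarrow> qstate" where
  "final_state P x y =
     (if fin_alice P
      then apply_op (alice_holds P (rounds P)) (ua P x (rounds P)) (run_upto P x y (rounds P))
      else apply_op (bob_holds P (rounds P)) (ub P y (rounds P)) (run_upto P x y (rounds P)))"

definition out_qubit :: "qproto \<Rightarrow> qlab" where
  "out_qubit P = (if fin_alice P then AQ 0 else BQ 0)"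

definition accept_prob :: "qproto \<Rightarrow> bool list \<Rightarrow> bool list \<Rightarrow> real" where
  "accept_prob P x y =
     (\<Sum>f\<in>basis_on (all_qubits P). if f (out_qubit P) then (cmod (final_state P x y f))^2 else 0)"

definition valid_proto :: "nat \<Rightarrow> qproto \<Rightarrow> bool" where
  "valid_proto n P \<longleftrightarrow> qa P \<ge> 1 \<and> qb P \<ge> 1 \<and>
     (\<forall>x t. length x = n \<and> t \<le> rounds P \<longrightarrow> unitary_on (alice_holds P t) (ua P x t)) \<and>
     (\<forall>y t. length y = n \<and> t \<le> rounds P \<longrightarrow> unitary_on (bob_holds P t) (ub P y t))"

definition nq_computes :: "nat \<Rightarrow> (bool list \<Rightarrow> bool list \<Rightarrow> bool) \<Rightarrow> qproto \<Rightarrow> bool" where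
  "nq_computes n F P \<longleftrightarrow> valid_proto n P \<and>
     (\<forall>x y. length x = n \<and> length y = n \<longrightarrow>
        (\<not> F x y \<longrightarrow> accept_prob P x y = 0) \<and> (F x y \<longrightarrow> accept_prob P x y > 0))"

definition NQC :: "nat \<Rightarrow> (bool list \<Rightarrow> bool list \<Rightarrow> bool) \<Rightarrow> nat" where
  "NQC n F = (LEAST k. \<exists>P. nq_computes n F P \<and> rounds P = k)"

definition HAM :: "nat \<Rightarrow> nat \<Rightarrow> bool list \<Rightarrow> bool list \<Rightarrow> bool" where
  "HAM n t x y \<longleftrightarrow> card {i. i < n \<and> x ! i \<noteq> y ! i} \<noteq> t"

end

theory Submission
  imports Defs "HOL-Library.Log_Nat"
begin

(* Alice encodes x as the phase state phi_x = (\<Sum>i. (-1)^x_i |i>) on m = floor (log2 n) + 1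
   message qubits. A single reflection about |0> - phi_x turns |0> into a combination of |0>
   and phi_x with nonzero weight on phi_x, and she sends the message qubits. Bob reflects about
   phi_y \<otimes> (|0> - |1>), the second factor being his output qubit. Applied to a state whose
   output qubit is 0, this creates output-1 amplitude only along phi_y \<otimes> |1>, with coefficient
   proportional to <phi_y|phi_x> = n - 2 d(x, y), since phi_y is orthogonal to |0>. So Bob
   accepts with positive probability iff d(x, y) \<noteq> n/2, after m = O(log n) qubits. *)

section \<open>Registers and reflections\<close>

lemma finite_basis_on: "finite S \<Longrightarrow> finite (basis_on S)"
proof -
  assume "finite S"
  have "basis_on S \<subseteq> (\<lambda>T q. q \<in> T) ` Pow S"
  proof
    fix f assume "f \<in> basis_on S"
    then have "{q. f q} \<subseteq> S" and "f = (\<lambda>q. q \<in> {q. f q})" by (auto simp: basis_on_def)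
    then show "f \<in> (\<lambda>T q. q \<in> T) ` Pow S" by blast
  qed
  with \<open>finite S\<close> show ?thesis by (meson finite_Pow_iff finite_imageI finite_subset)
qed

lemma basis_on_mono: "S \<subseteq> T \<Longrightarrow> basis_on S \<subseteq> basis_on T"
  by (auto simp: basis_on_def)

lemma zero_in_basis_on: "(\<lambda>_. False) \<in> basis_on S"
  by (simp add: basis_on_def)

definition supported_on :: "qlab set \<Rightarrow> qstate \<Rightarrow> bool" where
  "supported_on S \<psi> \<longleftrightarrow> (\<forall>f. f \<notin> basis_on S \<longrightarrow> \<psi> f = 0)"

lemma supported_on_mono: "S \<subseteq> T \<Longrightarrow> supported_on S \<psi> \<Longrightarrow> supported_on T \<psi>"
  unfolding supported_on_def by (meson basis_on_mono subsetD)

lemma init_state_zero: "init_state f = (if f = (\<lambda>_. False) then 1 else 0)"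
  by (auto simp: init_state_def fun_eq_iff)

lemma supported_on_init_state: "supported_on S init_state"
  by (simp add: supported_on_def init_state_zero zero_in_basis_on)

definition id_op :: qop where
  "id_op f g = of_bool (f = g)"

lemma sum_id_op_mult:
  assumes "finite A" "a \<in> A"
  shows "(\<Sum>g\<in>A. id_op a g * \<psi> g) = \<psi> a"
proof -
  have "A \<inter> {g. a = g} = {a}" using assms(2) by auto
  then show ?thesis using assms(1) by (simp add: id_op_def)
qed

lemma id_op_commute: "id_op f g = id_op g f"
  by (auto simp: id_op_def)

lemma cnj_id_op [simp]: "cnj (id_op f g) = id_op f g"
  by (simp add: id_op_def)

lemma restr_in_basis_on: "restr f S \<in> basis_on S"
  by (simp add: restr_def basis_on_def)

lemma unitary_on_id_op: "finite S \<Longrightarrow> unitary_on S id_op"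
  by (simp add: unitary_on_def id_op_commute[of _ "_ :: basis"] sum_id_op_mult finite_basis_on)
    (simp add: id_op_def)

lemma apply_op_id_op: "finite S \<Longrightarrow> apply_op S id_op \<psi> = \<psi>"
proof
  fix f assume "finite S"
  have "(\<lambda>q. restr f S q \<or> (q \<notin> S \<and> f q)) = f" by (auto simp: restr_def)
  with \<open>finite S\<close> show "apply_op S id_op \<psi> f = \<psi> f"
    by (simp add: apply_op_def sum_id_op_mult[where \<psi> = "\<lambda>g. \<psi> (\<lambda>q. g q \<or> (q \<notin> S \<and> f q))"]
        finite_basis_on restr_in_basis_on)
qed

definition inner_on :: "qlab set \<Rightarrow> qstate \<Rightarrow> qstate \<Rightarrow> complex" where
  "inner_on S \<phi> \<psi> = (\<Sum>g\<in>basis_on S. cnj (\<phi> g) * \<psi> g)"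

lemma inner_on_diff_left:
  "inner_on S (\<lambda>f. \<phi> f - \<chi> f) \<psi> = inner_on S \<phi> \<psi> - inner_on S \<chi> \<psi>"
  by (simp add: inner_on_def left_diff_distrib sum_subtractf)

lemma inner_on_init_state:
  assumes "finite S" shows "inner_on S \<phi> init_state = cnj (\<phi> (\<lambda>_. False))"
proof -
  have "init_state g = id_op (\<lambda>_. False) g" for g by (simp add: id_op_def init_state_zero)
  then show ?thesis
    using assms sum_id_op_mult[of "basis_on S" "\<lambda>_. False" "\<lambda>g. cnj (\<phi> g)"]
    by (simp add: inner_on_def finite_basis_on zero_in_basis_on mult.commute)
qed

lemma cnj_inner_on_self: "cnj (inner_on S \<phi> \<phi>) = inner_on S \<phi> \<phi>"
  by (simp add: inner_on_def mult.commute)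

lemma inner_on_self_neq_0:
  assumes "finite S" "f \<in> basis_on S" "\<phi> f \<noteq> 0"
  shows "inner_on S \<phi> \<phi> \<noteq> 0"
proof -
  have "inner_on S \<phi> \<phi> = of_real (\<Sum>g\<in>basis_on S. (cmod (\<phi> g))\<^sup>2)"
    by (simp add: inner_on_def complex_norm_square mult.commute del: of_real_power)
  moreover have "0 < (cmod (\<phi> f))\<^sup>2" using assms(3) by simp
  moreover have "(cmod (\<phi> f))\<^sup>2 \<le> (\<Sum>g\<in>basis_on S. (cmod (\<phi> g))\<^sup>2)"
    using assms(1,2) by (intro member_le_sum) (auto simp: finite_basis_on)
  ultimately show ?thesis by (metis of_real_eq_0_iff order_less_le_trans order.irrefl)
qed

lemma apply_op_supported:
  assumes "supported_on S \<psi>"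
  shows "apply_op S U \<psi> f = (if f \<in> basis_on S then \<Sum>g\<in>basis_on S. U f g * \<psi> g else 0)"
proof (cases "f \<in> basis_on S")
  case True
  then have "restr f S = f" and "(\<lambda>q. g q \<or> (q \<notin> S \<and> f q)) = g" for g
    by (auto simp: restr_def basis_on_def fun_eq_iff)
  with True show ?thesis by (simp add: apply_op_def)
next
  case False
  then obtain q where "q \<notin> S" "f q" by (auto simp: basis_on_def)
  then have "(\<lambda>q. g q \<or> (q \<notin> S \<and> f q)) \<notin> basis_on S" for g by (auto simp: basis_on_def)
  with assms False show ?thesis by (simp add: apply_op_def supported_on_def)
qed

text \<open>If p vanishes on the basis of S, division by zero makes this the identity; so it is
  unitary for every p.\<close>
definition reflection :: "qlab set \<Rightarrow> qstate \<Rightarrow> qop" where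
  "reflection S p = (\<lambda>f g. id_op f g - 2 * p f * cnj (p g) / inner_on S p p)"

lemma unitary_on_reflection:
  assumes "finite S" shows "unitary_on S (reflection S p)"
  unfolding unitary_on_def
proof (intro ballI)
  fix f g assume f: "f \<in> basis_on S" and g: "g \<in> basis_on S"
  define N where "N = inner_on S p p"
  have fin: "finite (basis_on S)" using assms by (rule finite_basis_on)
  have expand: "cnj (reflection S p h f) * reflection S p h g =
      id_op f h * id_op h g - id_op f h * (2 * p h * cnj (p g) / N)
      - id_op g h * (2 * cnj (p h) * p f / N) + 4 * p f * cnj (p g) / (N * N) * (cnj (p h) * p h)"
    for h
    using cnj_inner_on_self[of S p, folded N_def]
    by (cases "N = 0") (simp_all add: reflection_def N_def[symmetric] id_op_commute[of h] field_simps)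
  have four: "(\<Sum>h\<in>basis_on S. 4 * p f * cnj (p g) / (N * N) * (cnj (p h) * p h)) =
      4 * p f * cnj (p g) / (N * N) * N"
    by (simp add: N_def inner_on_def sum_distrib_left)
  have "(\<Sum>h\<in>basis_on S. cnj (reflection S p h f) * reflection S p h g) =
      id_op f g - 2 * p f * cnj (p g) / N - 2 * cnj (p g) * p f / N + 4 * p f * cnj (p g) / (N * N) * N"
    by (simp only: expand sum.distrib sum_subtractf sum_id_op_mult[OF fin f] sum_id_op_mult[OF fin g] four)
  also have "\<dots> = id_op f g"
    by (cases "N = 0") (simp_all add: field_simps)
  finally show "(\<Sum>h\<in>basis_on S. cnj (reflection S p h f) * reflection S p h g) =
      (if f = g then 1 else 0)"
    by (simp add: id_op_def)
qed

lemma apply_op_reflection: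
  assumes "finite S" "supported_on S p" "supported_on S \<psi>"
  shows "apply_op S (reflection S p) \<psi> = (\<lambda>f. \<psi> f - 2 * inner_on S p \<psi> / inner_on S p p * p f)"
proof
  fix f
  show "apply_op S (reflection S p) \<psi> f = \<psi> f - 2 * inner_on S p \<psi> / inner_on S p p * p f"
  proof (cases "f \<in> basis_on S")
    case True
    have "reflection S p f g * \<psi> g =
        id_op f g * \<psi> g - 2 * p f / inner_on S p p * (cnj (p g) * \<psi> g)" for g
      by (simp add: reflection_def algebra_simps)
    then have "(\<Sum>g\<in>basis_on S. reflection S p f g * \<psi> g) =
        (\<Sum>g\<in>basis_on S. id_op f g * \<psi> g) - 2 * p f / inner_on S p p * inner_on S p \<psi>"
      by (simp only: sum_subtractf inner_on_def sum_distrib_left)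
    with True assms show ?thesis
      by (simp add: apply_op_supported sum_id_op_mult finite_basis_on)
  next
    case False
    with assms(2,3) show ?thesis by (simp add: apply_op_supported supported_on_def)
  qed
qed

section \<open>Phase states on the message qubits\<close>

text \<open>Index i is written in binary as i + 1, so that no index is encoded by the all-zero
  basis state, which serves as Alice's reference state.\<close>
definition msg_code :: "nat \<Rightarrow> nat \<Rightarrow> basis" where
  "msg_code m i = (\<lambda>q. case q of CQ s \<Rightarrow> s < m \<and> bit (Suc i) s | _ \<Rightarrow> False)"

lemma msg_code_private [simp]: "msg_code m i (AQ k) = False" "msg_code m i (BQ k) = False"
  by (simp_all add: msg_code_def)

lemma msg_code_in_basis_on: "msg_code m i \<in> basis_on (CQ ` {..<m})"
  by (auto simp: msg_code_def basis_on_def split: qlab.splits)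

lemma bit_msg_code: "msg_code m i (CQ s) = bit (take_bit m (Suc i)) s"
  by (simp add: msg_code_def bit_take_bit_iff)

lemma msg_code_eq_iff:
  assumes "Suc i < 2 ^ m" "Suc j < 2 ^ m"
  shows "msg_code m i = msg_code m j \<longleftrightarrow> i = j"
proof
  assume eq: "msg_code m i = msg_code m j"
  have "bit (take_bit m (Suc i)) s = bit (take_bit m (Suc j)) s" for s
    using fun_cong[OF eq, of "CQ s"] by (simp only: bit_msg_code)
  then have "take_bit m (Suc i) = take_bit m (Suc j)"
    by (simp add: bit_eq_iff)
  with assms show "i = j" by (simp add: take_bit_nat_eq_self)
qed simp

lemma msg_code_neq_zero:
  assumes "Suc i < 2 ^ m"
  shows "msg_code m i \<noteq> (\<lambda>_. False)"
proof
  assume zero: "msg_code m i = (\<lambda>_. False)"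
  have "\<not> bit (take_bit m (Suc i)) s" for s
    using fun_cong[OF zero, of "CQ s"] by (simp add: bit_msg_code)
  then have "take_bit m (Suc i) = 0"
    by (simp add: bit_eq_iff)
  with assms show False by (simp add: take_bit_nat_eq_self)
qed

lemma inj_on_msg_code: "n < 2 ^ m \<Longrightarrow> inj_on (msg_code m) {..<n}"
  by (auto intro!: inj_onI simp: msg_code_eq_iff)

lemma zero_notin_msg_codes:
  assumes "n < 2 ^ m" shows "(\<lambda>_. False) \<notin> msg_code m ` {..<n}"
proof
  assume "(\<lambda>_. False) \<in> msg_code m ` {..<n}"
  then obtain i where "i < n" and "(\<lambda>_. False) = msg_code m i" by blast
  with assms msg_code_neq_zero[of i m] show False by simp
qed

definition phase :: "bool \<Rightarrow> complex" where
  "phase b = (if b then -1 else 1)"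

lemma cnj_phase [simp]: "cnj (phase b) = phase b"
  by (simp add: phase_def)

lemma phase_neq_0 [simp]: "phase b \<noteq> 0"
  by (simp add: phase_def)

definition phase_state :: "(nat \<Rightarrow> basis) \<Rightarrow> bool list \<Rightarrow> qstate" where
  "phase_state c x f = (\<Sum>i<length x. if f = c i then phase (x ! i) else 0)"

lemma phase_state_at:
  assumes "inj_on c {..<length x}" "i < length x"
  shows "phase_state c x (c i) = phase (x ! i)"
proof -
  have "phase_state c x (c i) = (\<Sum>j<length x. if j = i then phase (x ! j) else 0)"
    unfolding phase_state_def using assms by (intro sum.cong) (auto dest: inj_onD)
  with assms(2) show ?thesis by simp
qed

lemma phase_state_outside: "f \<notin> c ` {..<length x} \<Longrightarrow> phase_state c x f = 0"
  unfolding phase_state_def by (rule sum.neutral) auto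

lemma supported_on_phase_state:
  "(\<And>i. i < length x \<Longrightarrow> c i \<in> basis_on S) \<Longrightarrow> supported_on S (phase_state c x)"
  by (auto simp: supported_on_def intro: phase_state_outside)

lemma inner_on_phase_state:
  assumes "finite S" "\<And>i. i < length y \<Longrightarrow> c i \<in> basis_on S"
  shows "inner_on S (phase_state c y) \<psi> = (\<Sum>i<length y. phase (y ! i) * \<psi> (c i))"
proof -
  have "inner_on S (phase_state c y) \<psi> =
      (\<Sum>i<length y. \<Sum>g\<in>basis_on S. (if g = c i then phase (y ! i) else 0) * \<psi> g)"
    unfolding inner_on_def phase_state_def cnj_sum sum_distrib_right
    by (subst sum.swap) (simp add: if_distrib[of cnj] cong: if_cong)
  also have "\<dots> = (\<Sum>i<length y. \<Sum>g\<in>basis_on S. if g = c i then phase (y ! i) * \<psi> (c i) else 0)"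
    by (intro sum.cong refl) simp
  also have "\<dots> = (\<Sum>i<length y. phase (y ! i) * \<psi> (c i))"
    using assms by (simp add: finite_basis_on)
  finally show ?thesis .
qed

lemma finite_all_qubits: "finite (all_qubits P)"
proof -
  have "all_qubits P \<subseteq> AQ ` {..<qa P} \<union> BQ ` {..<qb P} \<union> CQ ` {..<rounds P}"
    by (auto simp: all_qubits_def)
  then show ?thesis by (rule finite_subset) simp
qed

lemma alice_holds_subset: "alice_holds P t \<subseteq> all_qubits P"
  by (auto simp: alice_holds_def all_qubits_def)

lemma bob_holds_subset: "bob_holds P t \<subseteq> all_qubits P"
  by (auto simp: bob_holds_def all_qubits_def)

lemma finite_alice_holds: "finite (alice_holds P t)"
  using alice_holds_subset finite_all_qubits by (rule finite_subset)

lemma finite_bob_holds: "finite (bob_holds P t)"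
  using bob_holds_subset finite_all_qubits by (rule finite_subset)

lemma accept_prob_nonneg: "0 \<le> accept_prob P x y"
  by (simp add: accept_prob_def sum_nonneg)

lemma accept_prob_pos_iff:
  "0 < accept_prob P x y \<longleftrightarrow>
     (\<exists>f\<in>basis_on (all_qubits P). f (out_qubit P) \<and> final_state P x y f \<noteq> 0)"
proof -
  have "finite (basis_on (all_qubits P))" by (simp add: finite_all_qubits finite_basis_on)
  then have "accept_prob P x y = 0 \<longleftrightarrow>
      (\<forall>f\<in>basis_on (all_qubits P). f (out_qubit P) \<longrightarrow> final_state P x y f = 0)"
    unfolding accept_prob_def by (subst sum_nonneg_eq_0_iff) auto
  with accept_prob_nonneg[of P x y] show ?thesis by force
qed

lemma NQC_le_rounds: "nq_computes n F P \<Longrightarrow> NQC n F \<le> rounds P"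
  unfolding NQC_def by (rule Least_le) blast

section \<open>The protocol for Hamming distance n/2\<close>

definition alice_reg :: "nat \<Rightarrow> qlab set" where
  "alice_reg m = insert (AQ 0) (CQ ` {..<m})"

definition bob_reg :: "nat \<Rightarrow> qlab set" where
  "bob_reg m = insert (BQ 0) (CQ ` {..<m})"

definition flagged_code :: "nat \<Rightarrow> nat \<Rightarrow> basis" where
  "flagged_code m i = (msg_code m i)(BQ 0 := True)"

definition alice_axis :: "nat \<Rightarrow> bool list \<Rightarrow> qstate" where
  "alice_axis m x = (\<lambda>f. init_state f - phase_state (msg_code m) x f)"

definition bob_axis :: "nat \<Rightarrow> bool list \<Rightarrow> qstate" where
  "bob_axis m y = (\<lambda>f. phase_state (msg_code m) y f - phase_state (flagged_code m) y f)"

definition hamming_proto :: "nat \<Rightarrow> qproto" where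
  "hamming_proto m =
    \<lparr>qa = 1, qb = 1, rounds = m, turn = (\<lambda>_. True),
     ua = (\<lambda>x t. if t = 0 then reflection (alice_reg m) (alice_axis m x) else id_op),
     ub = (\<lambda>y t. if t = m then reflection (bob_reg m) (bob_axis m y) else id_op),
     fin_alice = False\<rparr>"

definition sent_state :: "nat \<Rightarrow> bool list \<Rightarrow> qstate" where
  "sent_state m x = apply_op (alice_reg m) (reflection (alice_reg m) (alice_axis m x)) init_state"

lemma hamming_proto_simps [simp]:
  "qa (hamming_proto m) = 1" "qb (hamming_proto m) = 1" "rounds (hamming_proto m) = m"
  "turn (hamming_proto m) t" "fin_alice (hamming_proto m) = False"
  "ua (hamming_proto m) x t = (if t = 0 then reflection (alice_reg m) (alice_axis m x) else id_op)"
  "ub (hamming_proto m) y t = (if t = m then reflection (bob_reg m) (bob_axis m y) else id_op)"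
  by (simp_all add: hamming_proto_def)

lemma finite_alice_reg: "finite (alice_reg m)"
  by (simp add: alice_reg_def)

lemma finite_bob_reg: "finite (bob_reg m)"
  by (simp add: bob_reg_def)

lemma alice_holds_hamming_proto: "alice_holds (hamming_proto m) 0 = alice_reg m"
  by (auto simp: alice_holds_def alice_reg_def)

lemma bob_holds_hamming_proto: "bob_holds (hamming_proto m) m = bob_reg m"
  by (auto simp: bob_holds_def bob_reg_def)

lemma valid_hamming_proto: "valid_proto n (hamming_proto m)"
  unfolding valid_proto_def
  by (auto simp: alice_holds_hamming_proto bob_holds_hamming_proto finite_alice_reg
      finite_bob_reg unitary_on_reflection unitary_on_id_op finite_alice_holds finite_bob_holds)

lemma run_upto_hamming_proto:
  "t < m \<Longrightarrow> run_upto (hamming_proto m) x y (Suc t) = sent_state m x"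
proof (induction t)
  case 0
  then show ?case
    by (simp add: step_def sent_state_def alice_holds_hamming_proto)
next
  case (Suc t)
  then show ?case
    by (simp add: step_def apply_op_id_op finite_alice_holds)
qed

lemma flagged_code_BQ0 [simp]: "flagged_code m i (BQ 0)"
  by (simp add: flagged_code_def)

lemma flagged_code_neq_msg_code: "flagged_code m i \<noteq> msg_code m j"
  by (metis flagged_code_BQ0 msg_code_private(2))

lemma inj_on_flagged_code: "n < 2 ^ m \<Longrightarrow> inj_on (flagged_code m) {..<n}"
proof (rule inj_onI)
  fix i j assume n: "n < 2 ^ m" and ij: "i \<in> {..<n}" "j \<in> {..<n}"
    and eq: "flagged_code m i = flagged_code m j"
  have "msg_code m k = (flagged_code m k)(BQ 0 := False)" for k
    by (auto simp: flagged_code_def fun_eq_iff)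
  with eq have "msg_code m i = msg_code m j" by simp
  then show "i = j" using inj_on_msg_code[OF n] ij by (simp add: inj_on_eq_iff)
qed

lemma msg_code_in_bob_reg: "msg_code m i \<in> basis_on (bob_reg m)"
  by (auto simp: msg_code_def bob_reg_def basis_on_def split: qlab.splits)

lemma flagged_code_in_bob_reg: "flagged_code m i \<in> basis_on (bob_reg m)"
  using msg_code_in_basis_on[of m i]
  by (auto simp: flagged_code_def bob_reg_def basis_on_def)

lemma alice_axis_zero: "length x < 2 ^ m \<Longrightarrow> alice_axis m x (\<lambda>_. False) = 1"
  by (simp add: alice_axis_def init_state_zero phase_state_outside zero_notin_msg_codes)

lemma alice_axis_norm_neq_0:
  "length x < 2 ^ m \<Longrightarrow> inner_on (alice_reg m) (alice_axis m x) (alice_axis m x) \<noteq> 0"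
  by (rule inner_on_self_neq_0[OF finite_alice_reg zero_in_basis_on]) (simp add: alice_axis_zero)

lemma supported_on_alice_axis: "supported_on (CQ ` {..<m}) (alice_axis m x)"
  using supported_on_init_state supported_on_phase_state[OF msg_code_in_basis_on]
  by (simp add: supported_on_def alice_axis_def)

lemma supported_on_bob_axis: "supported_on (bob_reg m) (bob_axis m y)"
proof -
  have "supported_on (bob_reg m) (phase_state (msg_code m) y)"
    and "supported_on (bob_reg m) (phase_state (flagged_code m) y)"
    by (simp_all add: supported_on_phase_state msg_code_in_bob_reg flagged_code_in_bob_reg)
  then show ?thesis by (simp add: bob_axis_def supported_on_def)
qed

lemma bob_axis_flagged_code:
  assumes "length y < 2 ^ m" "i < length y"
  shows "bob_axis m y (flagged_code m i) = - phase (y ! i)"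
proof -
  have "flagged_code m i \<notin> msg_code m ` {..<length y}"
    using flagged_code_neq_msg_code by blast
  with assms show ?thesis
    by (simp add: bob_axis_def phase_state_outside phase_state_at inj_on_flagged_code)
qed

lemma sent_state_eq:
  assumes "length x < 2 ^ m"
  shows "sent_state m x = (\<lambda>f. init_state f -
    2 / inner_on (alice_reg m) (alice_axis m x) (alice_axis m x) * alice_axis m x f)"
proof -
  have "supported_on (alice_reg m) (alice_axis m x)"
    by (rule supported_on_mono[OF _ supported_on_alice_axis]) (auto simp: alice_reg_def)
  with assms show ?thesis
    unfolding sent_state_def
    by (simp add: apply_op_reflection finite_alice_reg supported_on_init_state
        inner_on_init_state alice_axis_zero)
qed

lemma supported_on_sent_state:
  "length x < 2 ^ m \<Longrightarrow> supported_on (CQ ` {..<m}) (sent_state m x)"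
  using supported_on_init_state supported_on_alice_axis
  by (simp add: sent_state_eq supported_on_def)

lemma sent_state_BQ0: "length x < 2 ^ m \<Longrightarrow> f (BQ 0) \<Longrightarrow> sent_state m x f = 0"
  using supported_on_sent_state by (auto simp: supported_on_def basis_on_def)

lemma sent_state_msg_code:
  assumes "length x < 2 ^ m" "i < length x"
  shows "sent_state m x (msg_code m i) =
    2 / inner_on (alice_reg m) (alice_axis m x) (alice_axis m x) * phase (x ! i)"
  using assms msg_code_neq_zero[of i m]
  by (simp add: sent_state_eq alice_axis_def init_state_zero phase_state_at inj_on_msg_code)

lemma inner_on_bob_axis_sent_state:
  assumes "length x = length y" "length x < 2 ^ m"
  shows "inner_on (bob_reg m) (bob_axis m y) (sent_state m x) =
    2 / inner_on (alice_reg m) (alice_axis m x) (alice_axis m x) *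
    (\<Sum>i<length x. phase (x ! i) * phase (y ! i))"
  using assms
  by (simp add: bob_axis_def inner_on_diff_left inner_on_phase_state finite_bob_reg
      msg_code_in_bob_reg flagged_code_in_bob_reg sent_state_msg_code sent_state_BQ0
      sum_distrib_left mult_ac)

lemma final_state_hamming_proto:
  assumes "length x < 2 ^ m" "0 < m"
  shows "final_state (hamming_proto m) x y = (\<lambda>f. sent_state m x f -
    2 * inner_on (bob_reg m) (bob_axis m y) (sent_state m x) /
    inner_on (bob_reg m) (bob_axis m y) (bob_axis m y) * bob_axis m y f)"
proof -
  have "supported_on (bob_reg m) (sent_state m x)"
    by (rule supported_on_mono[OF _ supported_on_sent_state[OF assms(1)]])
      (auto simp: bob_reg_def)
  moreover have "run_upto (hamming_proto m) x y m = sent_state m x"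
    using run_upto_hamming_proto[of "m - 1" m] assms(2) by simp
  ultimately show ?thesis
    by (simp add: final_state_def bob_holds_hamming_proto apply_op_reflection finite_bob_reg
        supported_on_bob_axis)
qed

lemma hamming_proto_accepts_iff:
  assumes "length x = length y" "length x < 2 ^ m" "0 < m"
  shows "0 < accept_prob (hamming_proto m) x y \<longleftrightarrow>
    (\<Sum>i<length x. phase (x ! i) * phase (y ! i)) \<noteq> 0"
proof -
  define I where "I = inner_on (bob_reg m) (bob_axis m y) (sent_state m x)"
  define N where "N = inner_on (bob_reg m) (bob_axis m y) (bob_axis m y)"
  let ?B = "basis_on (all_qubits (hamming_proto m))"
  have "0 < accept_prob (hamming_proto m) x y \<longleftrightarrow>
      (\<exists>f\<in>?B. f (BQ 0) \<and> final_state (hamming_proto m) x y f \<noteq> 0)"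
    by (simp add: accept_prob_pos_iff out_qubit_def)
  also have "\<dots> \<longleftrightarrow> (\<exists>f\<in>?B. f (BQ 0) \<and> 2 * I / N * bob_axis m y f \<noteq> 0)"
    using assms(2,3)
    by (intro bex_cong refl)
      (simp add: final_state_hamming_proto sent_state_BQ0 I_def N_def cong: conj_cong)
  also have "\<dots> \<longleftrightarrow> I \<noteq> 0"
  proof
    assume "I \<noteq> 0"
    then have y: "0 < length y"
      using assms(1) by (auto simp: I_def inner_on_bob_axis_sent_state[OF assms(1,2)])
    let ?f = "flagged_code m 0"
    have f: "bob_axis m y ?f = - phase (y ! 0)"
      using y assms(1,2) by (simp add: bob_axis_flagged_code)
    have "N \<noteq> 0"
      unfolding N_def using f
      by (intro inner_on_self_neq_0[OF finite_bob_reg flagged_code_in_bob_reg[of m 0]]) simp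
    moreover have "bob_reg m \<subseteq> all_qubits (hamming_proto m)"
      using bob_holds_subset[of "hamming_proto m" m] by (simp add: bob_holds_hamming_proto)
    then have "?f \<in> ?B"
      by (rule subsetD[OF basis_on_mono flagged_code_in_bob_reg])
    ultimately show "\<exists>f\<in>?B. f (BQ 0) \<and> 2 * I / N * bob_axis m y f \<noteq> 0"
      using \<open>I \<noteq> 0\<close> f by (intro bexI[of _ ?f]) simp_all
  qed auto
  also have "\<dots> \<longleftrightarrow> (\<Sum>i<length x. phase (x ! i) * phase (y ! i)) \<noteq> 0"
    unfolding I_def inner_on_bob_axis_sent_state[OF assms(1,2)]
    using alice_axis_norm_neq_0[OF assms(2)] by simp
  finally show ?thesis .
qed

lemma sum_phase_mult_eq:
  "(\<Sum>i<n. phase (x ! i) * phase (y ! i)) =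
    of_nat n - 2 * of_nat (card {i. i < n \<and> x ! i \<noteq> y ! i})"
proof -
  have "(\<Sum>i<n. phase (x ! i) * phase (y ! i)) = (\<Sum>i<n. 1 - 2 * of_bool (x ! i \<noteq> y ! i))"
    by (intro sum.cong) (auto simp: phase_def)
  also have "\<dots> = of_nat n - 2 * of_nat (card ({..<n} \<inter> {i. x ! i \<noteq> y ! i}))"
    by (simp add: sum_subtractf sum_distrib_left[symmetric])
  also have "{..<n} \<inter> {i. x ! i \<noteq> y ! i} = {i. i < n \<and> x ! i \<noteq> y ! i}"
    by auto
  finally show ?thesis .
qed

lemma HAM_half_iff:
  assumes "even n"
  shows "HAM n (n div 2) x y \<longleftrightarrow> (\<Sum>i<n. phase (x ! i) * phase (y ! i)) \<noteq> 0"
proof -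
  define d where "d = card {i. i < n \<and> x ! i \<noteq> y ! i}"
  have "(\<Sum>i<n. phase (x ! i) * phase (y ! i)) = 0 \<longleftrightarrow> (of_nat n :: complex) = of_nat (2 * d)"
    by (simp add: sum_phase_mult_eq d_def)
  also have "\<dots> \<longleftrightarrow> d = n div 2"
    using assms by (simp only: of_nat_eq_iff) (auto elim!: evenE)
  finally show ?thesis by (simp add: HAM_def d_def)
qed

lemma nq_computes_hamming_proto:
  assumes "even n" "n < 2 ^ m" "0 < m"
  shows "nq_computes n (HAM n (n div 2)) (hamming_proto m)"
proof -
  have "HAM n (n div 2) x y \<longleftrightarrow> 0 < accept_prob (hamming_proto m) x y"
    if "length x = n" "length y = n" for x y
    using that assms by (simp add: HAM_half_iff hamming_proto_accepts_iff)
  then show ?thesis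
    using accept_prob_nonneg[of "hamming_proto m"]
    by (auto simp: nq_computes_def valid_hamming_proto order_le_less)
qed

lemma floorlog_le_ln: "2 \<le> n \<Longrightarrow> real (floorlog 2 n) \<le> 2 / ln 2 * ln (real n)"
proof -
  assume "2 \<le> n"
  then have lg: "1 \<le> log 2 (real n)" by simp
  from \<open>2 \<le> n\<close> have "real (floorlog 2 n) = real (nat \<lfloor>log 2 (real n)\<rfloor>) + 1"
    by (simp add: floorlog_def)
  also have "\<dots> \<le> 2 * log 2 (real n)" using lg by linarith
  also have "\<dots> = 2 / ln 2 * ln (real n)" by (simp add: log_def)
  finally show ?thesis .
qed

theorem theorem5p4:
  shows "\<exists>C N. \<forall>n\<ge>N. even n \<longrightarrow>
           real (NQC n (HAM n (n div 2))) \<le> C * ln (real n)"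
proof (intro exI allI impI)
  fix n :: nat assume "2 \<le> n" and "even n"
  define m where "m = floorlog 2 n"
  have "n < 2 ^ m" and "0 < m"
    using \<open>2 \<le> n\<close> floorlog_bounds[of n 2] floorlog_eq_zero_iff[of 2 n] by (auto simp: m_def)
  then have "NQC n (HAM n (n div 2)) \<le> m"
    using NQC_le_rounds nq_computes_hamming_proto[OF \<open>even n\<close>] by fastforce
  then show "real (NQC n (HAM n (n div 2))) \<le> 2 / ln 2 * ln (real n)"
    using floorlog_le_ln[OF \<open>2 \<le> n\<close>] unfolding m_def by linarith
qed

end
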